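(* Let $f_0,g_1,\dots,g_q:\mathbb{R}^n\to\mathbb{R}$ with $f_0$ continuous and each $g_i$ lower semicontinuous. For $\nu\in\mathbb{N}$ let $f_0^\nu,g_1^\nu,\dots,g_q^\nu:\mathbb{R}^n\to\mathbb{R}$ and $\alpha^\nu\ge0$ satisfy $\sup_{x\in\mathbb{R}^n}|f_0^\nu(x)-f_0(x)|\le\alpha^\nu$ and $\sup_{x\in\mathbb{R}^n}\max_{i=1,\dots,q}|g_i^\nu(x)-g_i(x)|\le\alpha^\nu$, and let $\theta^\nu>0$. Define $f,f^\nu:\mathbb{R}^n\times\mathbb{R}^q\to(-\infty,\infty]$ by $$f(x,y)=f_0(x)+\sum_{i=1}^q\iota_{\{0\}}(y_i)+\sum_{i=1}^q\iota_{(-\infty,0]}\big(g_i(x)-y_i\big),$$ $$f^\nu(x,y)=f_0^\nu(x)+\sum_{i=1}^q\phi^\nu(y_i)+\sum_{i=1}^q\iota_{(-\infty,0]}\big(g_i^\nu(x)-y_i\big),\quad \phi^\nu(\beta)=\theta^\nu\beta \text{ if }\beta\ge0,\ \phi^\nu(\beta)=\infty\text{ otherwise}.$$ If $\theta^\nu\to\infty$ and $\theta^\nu\alpha^\nu\to0$, then $f^\nu$ epi-converges to $f$.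
   Context: For a set $C$, $\iota_C(u)=0$ if $u\in C$ and $\iota_C(u)=\infty$ otherwise. A sequence $f^\nu$ epi-converges to $f$ if the epigraphs $\{(z,\alpha)\mid f^\nu(z)\le\alpha\}$ set-converge in the Painlevé–Kuratowski sense to $\{(z,\alpha)\mid f(z)\le\alpha\}$; equivalently, (i) for every $z^\nu\to z$, $\liminf f^\nu(z^\nu)\ge f(z)$, and (ii) for every $z$ there exists $z^\nu\to z$ with $\limsup f^\nu(z^\nu)\le f(z)$. *)

theory Defs
  imports "HOL-Analysis.Analysis"
begin

definition lsc :: "('a::topological_space \<Rightarrow> real) \<Rightarrow> bool" where
  "lsc g \<longleftrightarrow> (\<forall>x. \<forall>c. c < g x \<longrightarrow> (\<forall>\<^sub>F y in nhds x. c < g y))"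

definition iota :: "'a set \<Rightarrow> 'a \<Rightarrow> ereal" where
  "iota C u = (if u \<in> C then 0 else \<infinity>)"

definition epigraph :: "('a \<Rightarrow> ereal) \<Rightarrow> ('a \<times> real) set" where
  "epigraph f = {(z, a). f z \<le> ereal a}"

definition inner_limit :: "(nat \<Rightarrow> 'a::topological_space set) \<Rightarrow> 'a set" where
  "inner_limit C = {z. \<exists>zs. (zs \<longlongrightarrow> z) sequentially \<and> (\<forall>\<^sub>F k in sequentially. zs k \<in> C k)}"

definition outer_limit :: "(nat \<Rightarrow> 'a::topological_space set) \<Rightarrow> 'a set" where
  "outer_limit C = {z. \<exists>r zs. strict_mono r \<and> (zs \<longlongrightarrow> z) sequentially \<and> (\<forall>k. zs k \<in> C (r k))}"

definition set_converges :: "(nat \<Rightarrow> 'a::topological_space set) \<Rightarrow> 'a set \<Rightarrow> bool" where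
  "set_converges C D \<longleftrightarrow> inner_limit C = D \<and> outer_limit C = D"

definition epi_converges :: "(nat \<Rightarrow> 'a::topological_space \<Rightarrow> ereal) \<Rightarrow> ('a \<Rightarrow> ereal) \<Rightarrow> bool" where
  "epi_converges fs f \<longleftrightarrow> set_converges (\<lambda>k. epigraph (fs k)) (epigraph f)"

definition phi :: "real \<Rightarrow> real \<Rightarrow> ereal" where
  "phi \<theta> b = (if b \<ge> 0 then ereal (\<theta> * b) else \<infinity>)"

end

theory Submission
  imports Defs
begin

text \<open>
  Both epigraphs are explicit: epi f consists of the points ((x, 0), a) with g x \<le> 0 and
  f0 x \<le> a, while epi f^\<nu> consists of the ((x, y), a) with max 0 (g^\<nu> x) \<le> y and
  f0^\<nu> x + \<theta>^\<nu> \<Sigma>y \<le> a.  A point of epi f is approached by raising every y_i from 0 to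
  \<alpha>^\<nu>, which costs at most \<alpha>^\<nu> + q \<theta>^\<nu> \<alpha>^\<nu> \<longrightarrow> 0 in the level.  Conversely, along a
  convergent sequence in the epigraphs \<theta>^\<nu> \<Sigma>y^\<nu> stays bounded, so \<theta>^\<nu> \<longrightarrow> \<infinity> forces
  y^\<nu> \<longrightarrow> 0; then g x \<le> 0 follows by lower semicontinuity and f0 x \<le> a by continuity,
  the perturbations being uniformly small.
\<close>

lemma inner_limit_subset_outer_limit: "inner_limit C \<subseteq> outer_limit C"
proof
  fix z assume "z \<in> inner_limit C"
  then obtain zs N where zs: "zs \<longlonglongrightarrow> z" and N: "\<And>k. k \<ge> N \<Longrightarrow> zs k \<in> C k"
    unfolding inner_limit_def eventually_sequentially by blast
  have "strict_mono (\<lambda>k. k + N)" by (simp add: strict_mono_def)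
  moreover have "(\<lambda>k. zs (k + N)) \<longlonglongrightarrow> z" using zs by (rule LIMSEQ_ignore_initial_segment)
  ultimately show "z \<in> outer_limit C" unfolding outer_limit_def using N by force
qed

lemma set_convergesI:
  assumes "D \<subseteq> inner_limit C" and "outer_limit C \<subseteq> D"
  shows "set_converges C D"
  using assms inner_limit_subset_outer_limit[of C] unfolding set_converges_def by blast

lemma tendsto_0_if_mult_tendsto_0_at_top:
  fixes \<theta> \<alpha> :: "'a \<Rightarrow> real"
  assumes \<theta>: "filterlim \<theta> at_top F" and \<theta>\<alpha>: "((\<lambda>k. \<theta> k * \<alpha> k) \<longlongrightarrow> 0) F"
  shows "(\<alpha> \<longlongrightarrow> 0) F"
proof -
  have "((\<lambda>k. \<theta> k * \<alpha> k / \<theta> k) \<longlongrightarrow> 0) F"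
    using \<theta>\<alpha> filterlim_at_top_imp_at_infinity[OF \<theta>] by (rule tendsto_divide_0)
  moreover have "\<forall>\<^sub>F k in F. \<theta> k > 0"
    using \<theta> unfolding filterlim_at_top_dense by blast
  then have "\<forall>\<^sub>F k in F. \<theta> k * \<alpha> k / \<theta> k = \<alpha> k"
    by (rule eventually_mono) simp
  ultimately show ?thesis by (simp add: tendsto_cong)
qed

lemma tendsto_0_if_nonneg_mult_le:
  fixes y \<theta> c :: "'a \<Rightarrow> real"
  assumes nonneg: "\<forall>\<^sub>F k in F. 0 \<le> y k" and le: "\<forall>\<^sub>F k in F. \<theta> k * y k \<le> c k"
    and c: "(c \<longlongrightarrow> c0) F" and \<theta>: "filterlim \<theta> at_top F"
  shows "(y \<longlongrightarrow> 0) F"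
proof (rule tendsto_sandwich[of "\<lambda>_. 0" _ _ "\<lambda>k. c k / \<theta> k"])
  have "\<forall>\<^sub>F k in F. \<theta> k > 0"
    using \<theta> unfolding filterlim_at_top_dense by blast
  with le show "\<forall>\<^sub>F k in F. y k \<le> c k / \<theta> k"
    by eventually_elim (simp add: pos_le_divide_eq mult.commute)
  show "((\<lambda>k. c k / \<theta> k) \<longlongrightarrow> 0) F"
    using c filterlim_at_top_imp_at_infinity[OF \<theta>] by (rule tendsto_divide_0)
qed (use nonneg in auto)

lemma tendsto_uniform_approx_compose:
  fixes h :: "'b::t2_space \<Rightarrow> real"
  assumes approx: "\<forall>\<^sub>F k in F. \<forall>z. \<bar>hs k z - h z\<bar> \<le> \<alpha> k" and \<alpha>: "(\<alpha> \<longlongrightarrow> 0) F"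
    and h: "isCont h x" and xs: "(xs \<longlongrightarrow> x) F"
  shows "((\<lambda>k. hs k (xs k)) \<longlongrightarrow> h x) F"
proof -
  have "((\<lambda>k. hs k (xs k) - h (xs k)) \<longlongrightarrow> 0) F"
  proof (rule tendsto_sandwich[of "\<lambda>k. - \<alpha> k" _ _ \<alpha>])
    show "\<forall>\<^sub>F k in F. - \<alpha> k \<le> hs k (xs k) - h (xs k)" "\<forall>\<^sub>F k in F. hs k (xs k) - h (xs k) \<le> \<alpha> k"
      using approx by (auto elim!: eventually_mono) (smt (verit))+
  qed (use \<alpha> tendsto_minus[OF \<alpha>] in auto)
  moreover have "((\<lambda>k. h (xs k)) \<longlongrightarrow> h x) F" using h xs by (rule isCont_tendsto_compose)
  ultimately show ?thesis by (auto dest: tendsto_add)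
qed

lemma lsc_le_lim:
  assumes "lsc g" "F \<noteq> bot" "(xs \<longlongrightarrow> x) F" "(d \<longlongrightarrow> d0) F" "\<forall>\<^sub>F k in F. g (xs k) \<le> d k"
  shows "g x \<le> d0"
proof (rule ccontr)
  assume "\<not> g x \<le> d0"
  then have mid: "(g x + d0) / 2 < g x" "d0 < (g x + d0) / 2" by auto
  have "\<forall>\<^sub>F w in nhds x. (g x + d0) / 2 < g w"
    using \<open>lsc g\<close> mid(1) unfolding lsc_def by blast
  then have "\<forall>\<^sub>F k in F. (g x + d0) / 2 < g (xs k)"
    using \<open>(xs \<longlongrightarrow> x) F\<close> by (rule eventually_compose_filterlim)
  moreover have "\<forall>\<^sub>F k in F. d k < (g x + d0) / 2"
    using order_tendstoD(2)[OF \<open>(d \<longlongrightarrow> d0) F\<close> mid(2)] .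
  ultimately have "\<forall>\<^sub>F k in F. False"
    using \<open>\<forall>\<^sub>F k in F. g (xs k) \<le> d k\<close> by eventually_elim linarith
  with \<open>F \<noteq> bot\<close> show False by (simp add: eventually_False)
qed

lemma penalty_sum_eq:
  fixes y :: "real^'q::finite" and G :: "'q \<Rightarrow> real"
  assumes "t \<ge> 0"
  shows "ereal c + (\<Sum>i\<in>UNIV. phi t (y $ i)) + (\<Sum>i\<in>UNIV. iota {..0} (G i - y $ i))
     = (if \<forall>i. 0 \<le> y $ i \<and> G i \<le> y $ i then ereal (c + t * (\<Sum>i\<in>UNIV. y $ i)) else \<infinity>)"
proof -
  have "(\<Sum>i\<in>UNIV. phi t (y $ i)) \<ge> 0" "(\<Sum>i\<in>UNIV. iota {..0} (G i - y $ i)) \<ge> 0"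
    by (simp_all add: sum_nonneg phi_def iota_def \<open>t \<ge> 0\<close>)
  then show ?thesis
    by (auto simp: phi_def iota_def sum_ereal sum_distrib_left sum_Pinfty)
qed

lemma indicator_sum_eq:
  fixes y :: "real^'q::finite" and G :: "'q \<Rightarrow> real"
  shows "ereal c + (\<Sum>i\<in>UNIV. iota {0} (y $ i)) + (\<Sum>i\<in>UNIV. iota {..0} (G i - y $ i))
     = (if y = 0 \<and> (\<forall>i. G i \<le> 0) then ereal c else \<infinity>)"
proof -
  have "(\<Sum>i\<in>UNIV. iota {0} (y $ i)) \<ge> 0" "(\<Sum>i\<in>UNIV. iota {..0} (G i - y $ i)) \<ge> 0"
    by (simp_all add: sum_nonneg iota_def)
  then show ?thesis
    by (auto simp: iota_def sum_Pinfty vec_eq_iff)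
qed

locale penalty_approximation =
  fixes f0 :: "real^'n \<Rightarrow> real"
    and g :: "'q::finite \<Rightarrow> real^'n \<Rightarrow> real"
    and f0s :: "nat \<Rightarrow> real^'n \<Rightarrow> real"
    and gs :: "nat \<Rightarrow> 'q \<Rightarrow> real^'n \<Rightarrow> real"
    and \<alpha> \<theta> :: "nat \<Rightarrow> real"
  assumes f0_cont: "continuous_on UNIV f0"
    and g_lsc: "\<And>i. lsc (g i)"
    and alpha_nonneg: "\<And>k. \<alpha> k \<ge> 0"
    and f0_approx: "\<And>k x. \<bar>f0s k x - f0 x\<bar> \<le> \<alpha> k"
    and g_approx: "\<And>k i x. \<bar>gs k i x - g i x\<bar> \<le> \<alpha> k"
    and theta_pos: "\<And>k. \<theta> k > 0"
    and theta_lim: "filterlim \<theta> at_top sequentially"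
    and theta_alpha_lim: "(\<lambda>k. \<theta> k * \<alpha> k) \<longlonglongrightarrow> 0"
begin

definition epi_penalized :: "nat \<Rightarrow> (((real^'n) \<times> (real^'q)) \<times> real) set" where
  "epi_penalized k = {((x, y), a). (\<forall>i. 0 \<le> y $ i \<and> gs k i x \<le> y $ i)
                         \<and> f0s k x + \<theta> k * (\<Sum>i\<in>UNIV. y $ i) \<le> a}"

definition epi_constrained :: "(((real^'n) \<times> (real^'q)) \<times> real) set" where
  "epi_constrained = {((x, y), a). y = 0 \<and> (\<forall>i. g i x \<le> 0) \<and> f0 x \<le> a}"

lemma alpha_lim: "\<alpha> \<longlonglongrightarrow> 0"
  using theta_lim theta_alpha_lim by (rule tendsto_0_if_mult_tendsto_0_at_top)

lemma epi_constrained_subset_inner_limit: "epi_constrained \<subseteq> inner_limit epi_penalized"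
proof
  fix z assume "z \<in> epi_constrained"
  then obtain x a where z: "z = ((x, 0), a)" and gx: "\<And>i. g i x \<le> 0" and fa: "f0 x \<le> a"
    unfolding epi_constrained_def by blast
  define zs where "zs k = ((x, (\<chi> i. \<alpha> k) :: real^'q), a + \<alpha> k + real CARD('q) * (\<theta> k * \<alpha> k))" for k
  have "(\<lambda>k. (\<chi> i. \<alpha> k) :: real^'q) \<longlonglongrightarrow> (\<chi> i. 0)"
    by (intro tendsto_vec_lambda alpha_lim)
  moreover have "(\<lambda>k. a + \<alpha> k + real CARD('q) * (\<theta> k * \<alpha> k)) \<longlonglongrightarrow> a + 0 + real CARD('q) * 0"
    by (intro tendsto_intros alpha_lim theta_alpha_lim)
  ultimately have "zs \<longlonglongrightarrow> z"
    unfolding zs_def z by (auto intro!: tendsto_Pair simp: zero_vec_def)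
  moreover have "zs k \<in> epi_penalized k" for k
  proof -
    have "gs k i x \<le> \<alpha> k" for i
      using g_approx[of k i x] gx[of i] by linarith
    moreover have "f0s k x \<le> a + \<alpha> k"
      using f0_approx[of k x] fa by linarith
    ultimately show ?thesis
      unfolding zs_def epi_penalized_def by (simp add: alpha_nonneg algebra_simps)
  qed
  ultimately show "z \<in> inner_limit epi_penalized"
    unfolding inner_limit_def by auto
qed

lemma outer_limit_subset_epi_constrained: "outer_limit epi_penalized \<subseteq> epi_constrained"
proof
  fix z assume "z \<in> outer_limit epi_penalized"
  then obtain r zs where r: "strict_mono r" and zs: "zs \<longlonglongrightarrow> z"
    and mem: "\<And>k. zs k \<in> epi_penalized (r k)"
    unfolding outer_limit_def by blast
  obtain x y a where z: "z = ((x, y), a)" by (metis prod.collapse)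
  define xs ys as where "xs k = fst (fst (zs k))" and "ys k = snd (fst (zs k))"
    and "as k = snd (zs k)" for k
  then have zs_eq: "zs = (\<lambda>k. ((xs k, ys k), as k))" by simp
  have xs: "xs \<longlonglongrightarrow> x" and ys: "ys \<longlonglongrightarrow> y" and as: "as \<longlonglongrightarrow> a"
    using tendsto_fst[OF tendsto_fst[OF zs]] tendsto_snd[OF tendsto_fst[OF zs]] tendsto_snd[OF zs]
    by (simp_all add: zs_eq z)
  have ys_nonneg: "0 \<le> ys k $ i" and gs_le: "gs (r k) i (xs k) \<le> ys k $ i"
    and level: "f0s (r k) (xs k) + \<theta> (r k) * (\<Sum>i\<in>UNIV. ys k $ i) \<le> as k" for k i
    using mem[of k] by (simp_all add: zs_eq epi_penalized_def)
  have alpha_r: "(\<lambda>k. \<alpha> (r k)) \<longlonglongrightarrow> 0"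
    using LIMSEQ_subseq_LIMSEQ[OF alpha_lim r] by (simp add: o_def)
  have theta_r: "filterlim (\<lambda>k. \<theta> (r k)) at_top sequentially"
    using filterlim_compose[OF theta_lim filterlim_subseq[OF r]] by (simp add: o_def)
  have f0s_lim: "(\<lambda>k. f0s (r k) (xs k)) \<longlonglongrightarrow> f0 x"
  proof (rule tendsto_uniform_approx_compose[OF _ alpha_r _ xs])
    show "isCont f0 x" using f0_cont by (simp add: continuous_on_eq_continuous_at)
  qed (simp add: f0_approx)
  have penalty_le: "\<theta> (r k) * ys k $ i \<le> as k - f0s (r k) (xs k)" for k i
  proof -
    have "ys k $ i \<le> (\<Sum>i\<in>UNIV. ys k $ i)"
      using ys_nonneg by (intro member_le_sum) auto
    then have "\<theta> (r k) * ys k $ i \<le> \<theta> (r k) * (\<Sum>i\<in>UNIV. ys k $ i)"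
      using theta_pos by (simp add: less_imp_le)
    with level[of k] show ?thesis by linarith
  qed
  have "f0 x \<le> a"
  proof (rule LIMSEQ_le[OF f0s_lim as])
    have "0 \<le> \<theta> (r k) * (\<Sum>i\<in>UNIV. ys k $ i)" for k
      using theta_pos ys_nonneg by (simp add: less_imp_le sum_nonneg)
    then show "\<exists>N. \<forall>k\<ge>N. f0s (r k) (xs k) \<le> as k"
      using level by (meson add_increasing2 order_trans order_refl)
  qed
  moreover have ys_lim: "(\<lambda>k. ys k $ i) \<longlonglongrightarrow> 0" for i
    using ys_nonneg penalty_le
    by (intro tendsto_0_if_nonneg_mult_le[OF _ _ tendsto_diff[OF as f0s_lim] theta_r] always_eventually) simp_all
  then have "y = 0"
    using LIMSEQ_unique[OF tendsto_vec_nth[OF ys]] by (simp add: vec_eq_iff)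
  moreover have "g i x \<le> 0" for i
  proof (rule lsc_le_lim[OF g_lsc _ xs])
    show "(\<lambda>k. ys k $ i + \<alpha> (r k)) \<longlonglongrightarrow> 0"
      using tendsto_add[OF ys_lim alpha_r] by simp
    show "\<forall>\<^sub>F k in sequentially. g i (xs k) \<le> ys k $ i + \<alpha> (r k)"
    proof (intro always_eventually allI)
      fix k
      show "g i (xs k) \<le> ys k $ i + \<alpha> (r k)"
        using g_approx[of "r k" i "xs k"] gs_le[of k i] by linarith
    qed
  qed simp
  ultimately show "z \<in> epi_constrained"
    unfolding z epi_constrained_def by blast
qed

end

theorem mainTheorem5:
  fixes f0 :: "real^'n \<Rightarrow> real"
    and g :: "'q::finite \<Rightarrow> real^'n \<Rightarrow> real"
    and f0s :: "nat \<Rightarrow> real^'n \<Rightarrow> real"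
    and gs :: "nat \<Rightarrow> 'q \<Rightarrow> real^'n \<Rightarrow> real"
    and \<alpha> \<theta> :: "nat \<Rightarrow> real"
    and f :: "(real^'n) \<times> (real^'q) \<Rightarrow> ereal"
    and fs :: "nat \<Rightarrow> (real^'n) \<times> (real^'q) \<Rightarrow> ereal"
  assumes f0_cont: "continuous_on UNIV f0"
    and g_lsc: "\<And>i. lsc (g i)"
    and alpha_nonneg: "\<And>k. \<alpha> k \<ge> 0"
    and f0_approx: "\<And>k x. \<bar>f0s k x - f0 x\<bar> \<le> \<alpha> k"
    and g_approx: "\<And>k i x. \<bar>gs k i x - g i x\<bar> \<le> \<alpha> k"
    and theta_pos: "\<And>k. \<theta> k > 0"
    and f_def: "\<And>x y. f (x, y) = ereal (f0 x) + (\<Sum>i\<in>UNIV. iota {0} (y $ i))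
                         + (\<Sum>i\<in>UNIV. iota {..0} (g i x - y $ i))"
    and fs_def: "\<And>k x y. fs k (x, y) = ereal (f0s k x) + (\<Sum>i\<in>UNIV. phi (\<theta> k) (y $ i))
                         + (\<Sum>i\<in>UNIV. iota {..0} (gs k i x - y $ i))"
    and theta_lim: "filterlim \<theta> at_top sequentially"
    and theta_alpha_lim: "(\<lambda>k. \<theta> k * \<alpha> k) \<longlonglongrightarrow> 0"
  shows "epi_converges fs f"
proof -
  interpret penalty_approximation f0 g f0s gs \<alpha> \<theta>
    using assms by unfold_locales
  have "fs k (x, y) = (if \<forall>i. 0 \<le> y $ i \<and> gs k i x \<le> y $ i
                       then ereal (f0s k x + \<theta> k * (\<Sum>i\<in>UNIV. y $ i)) else \<infinity>)" for k x y
    using theta_pos[of k] by (simp add: fs_def penalty_sum_eq)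
  then have "epigraph (fs k) = epi_penalized k" for k
    unfolding epigraph_def epi_penalized_def by (auto split: if_splits)
  moreover have "f (x, y) = (if y = 0 \<and> (\<forall>i. g i x \<le> 0) then ereal (f0 x) else \<infinity>)" for x y
    by (simp add: f_def indicator_sum_eq)
  then have "epigraph f = epi_constrained"
    unfolding epigraph_def epi_constrained_def by (auto split: if_splits)
  ultimately show ?thesis
    unfolding epi_converges_def
    by (simp add: set_convergesI epi_constrained_subset_inner_limit outer_limit_subset_epi_constrained)
qed

end
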